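(* Let $L$ be an infinite set and let $Q$ be either the edgeless cube $Q_L$ or the edged cube $\bar Q_L$. A basic sequence on $Q$ is universally convergent if and only if it is twist-finite.
   Context: Let $L$ be an infinite set, $-L=\{-r:r\in L\}$ a disjoint copy of $L$, and $0$ a new element; $L^\dagger=-L\cup\{0\}\cup L$ with $-(-r)=r$, $-0=0$. Adjoin $\pm\infty$ with $-(+\infty)=-\infty$ and set $\bar L^\dagger=L^\dagger\cup\{\pm\infty\}$. Points of $U=(\bar L^\dagger)^3$ have coordinates $x,y,z$. The edgeless cube $Q_L$ is the set of points of $U$ with exactly one coordinate in $\{\pm\infty\}$ (cells). The edged cube $\bar Q_L$ is the set of cells $(p,i)$ with $p\in U$, $i\in\{x,y,z\}$, $p_i\in\{\pm\infty\}$ ($i$ marks the face). For $i\in\{x,y,z\}$, $\alpha\in\bar L^\dagger$, the quarter-turn twist $T_{i,\alpha}$ is the permutation of cells fixing every cell whose point $p$ has $p_i\ne\alpha$ and acting on the others by $T_{x,\alpha}(\alpha,y,z)=(\alpha,-z,y)$, $T_{y,\alpha}(x,\alpha,z)=(z,\alpha,-x)$, $T_{z,\alpha}(x,y,\alpha)=(-y,x,\alpha)$ (in $\bar Q_L$ the marked coordinate is carried along by the rotation). Basic twists are $T,T^2,T^3$ for quarter-turn twists $T$. A basic sequence is a sequence $\langle\sigma_\eta:\eta<\theta\rangle$ of basic twists of ordinal length $\theta$; it is twist-finite if each basic twist occurs in it only finitely many times. A labelling is a map $f$ from cells to $X\cup\{\mathrm{NaC}\}$ for a set $X\not\ni\mathrm{NaC}$;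 it is legal if it never takes value NaC. A twist $\sigma$ acts by $(\sigma f)(c)=f(\sigma^{-1}c)$. Applying $\langle\sigma_\eta:\eta<\theta\rangle$ to $f_0$ produces $f_{\eta+1}=\sigma_\eta f_\eta$, and for limit $\lambda\le\theta$, $f_\lambda(c)$ is the eventually constant value of $f_\eta(c)$ ($\eta<\lambda$) if it exists and NaC otherwise; $f_\theta$ is the terminal labelling. The sequence is universally convergent if, applied to the identity labelling (each cell labelled by itself), its terminal labelling is legal. *)

theory Defs
  imports Main
begin

datatype 'a crd = Neg 'a | Zero | Pos 'a | PInf | NInf

fun cneg :: "'a crd \<Rightarrow> 'a crd" where
  "cneg (Neg r) = Pos r"
| "cneg (Pos r) = Neg r"
| "cneg Zero = Zero"
| "cneg PInf = NInf"
| "cneg NInf = PInf"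

definition crd_set :: "'a set \<Rightarrow> 'a crd set" where
  "crd_set L = {Neg r | r. r \<in> L} \<union> {Zero} \<union> {Pos r | r. r \<in> L} \<union> {PInf, NInf}"

definition is_inf :: "'a crd \<Rightarrow> bool" where
  "is_inf c \<longleftrightarrow> c = PInf \<or> c = NInf"

datatype axis = AX | AY | AZ

type_synonym 'a pt = "'a crd \<times> 'a crd \<times> 'a crd"

fun coord :: "axis \<Rightarrow> 'a pt \<Rightarrow> 'a crd" where
  "coord AX (x, y, z) = x"
| "coord AY (x, y, z) = y"
| "coord AZ (x, y, z) = z"

definition Ucube :: "'a set \<Rightarrow> 'a pt set" where
  "Ucube L = {p. \<forall>i. coord i p \<in> crd_set L}"

definition edgeless :: "'a set \<Rightarrow> 'a pt set" where
  "edgeless L = {p \<in> Ucube L. card {i. is_inf (coord i p)} = 1}"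

text \<open>Edged cube: pairs (p, i) with p_i infinite (i marks the face).\<close>
definition edged :: "'a set \<Rightarrow> ('a pt \<times> axis) set" where
  "edged L = {(p, i). p \<in> Ucube L \<and> is_inf (coord i p)}"

fun rotp :: "axis \<Rightarrow> 'a pt \<Rightarrow> 'a pt" where
  "rotp AX (x, y, z) = (x, cneg z, y)"
| "rotp AY (x, y, z) = (z, y, cneg x)"
| "rotp AZ (x, y, z) = (cneg y, x, z)"

text \<open>How the rotation about axis i carries a marked coordinate.\<close>
fun rota :: "axis \<Rightarrow> axis \<Rightarrow> axis" where
  "rota AX AX = AX" | "rota AX AY = AZ" | "rota AX AZ = AY"
| "rota AY AY = AY" | "rota AY AX = AZ" | "rota AY AZ = AX"
| "rota AZ AZ = AZ" | "rota AZ AX = AY" | "rota AZ AY = AX"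

definition qturn_pt :: "'a set \<Rightarrow> axis \<Rightarrow> 'a crd \<Rightarrow> 'a pt \<Rightarrow> 'a pt" where
  "qturn_pt L i \<alpha> p = (if p \<in> edgeless L \<and> coord i p = \<alpha> then rotp i p else p)"

definition qturn_edge :: "'a set \<Rightarrow> axis \<Rightarrow> 'a crd \<Rightarrow> 'a pt \<times> axis \<Rightarrow> 'a pt \<times> axis" where
  "qturn_edge L i \<alpha> c =
     (if c \<in> edged L \<and> coord i (fst c) = \<alpha> then (rotp i (fst c), rota i (snd c)) else c)"

definition basic_twists :: "'a crd set \<Rightarrow> (axis \<Rightarrow> 'a crd \<Rightarrow> 'c \<Rightarrow> 'c) \<Rightarrow> ('c \<Rightarrow> 'c) set" where
  "basic_twists A qt = {(qt i \<alpha>) ^^ k | i \<alpha> k. \<alpha> \<in> A \<and> k \<in> {1, 2, 3}}"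

datatype 'x lab = Val 'x | NaC

definition act :: "('c \<Rightarrow> 'c) \<Rightarrow> ('c \<Rightarrow> 'x lab) \<Rightarrow> ('c \<Rightarrow> 'x lab)" where
  "act \<sigma> f = (\<lambda>c. f (inv \<sigma> c))"

text \<open>A basic sequence of ordinal length theta is indexed by a well-ordered set I
  (of order type theta). Stages are cuts: Some i is the stage just before the
  twist at i is applied (f_eta, eta the position of i); None is the terminal stage f_theta.\<close>
fun cut_below :: "'i::wellorder set \<Rightarrow> 'i option \<Rightarrow> 'i set" where
  "cut_below I None = I"
| "cut_below I (Some i) = {k \<in> I. k < i}"

definition stage ::
  "'i::wellorder set \<Rightarrow> ('i \<Rightarrow> 'c \<Rightarrow> 'c) \<Rightarrow> ('c \<Rightarrow> 'x lab)
    \<Rightarrow> ('i option \<Rightarrow> 'c \<Rightarrow> 'x lab) \<Rightarrow> 'i option \<Rightarrow> 'c \<Rightarrow> 'x lab" where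
  "stage I \<sigma> f0 F x =
     (let B = cut_below I x in
      if B = {} then f0
      else if (\<exists>m\<in>B. \<forall>k\<in>B. k \<le> m) then
        (let m = (THE m. m \<in> B \<and> (\<forall>k\<in>B. k \<le> m)) in act (\<sigma> m) (F (Some m)))
      else (\<lambda>c. if (\<exists>v. \<exists>k\<in>B. \<forall>k'\<in>B. k \<le> k' \<longrightarrow> F (Some k') c = v)
                then (THE v. \<exists>k\<in>B. \<forall>k'\<in>B. k \<le> k' \<longrightarrow> F (Some k') c = v)
                else NaC))"

definition run ::
  "'i::wellorder set \<Rightarrow> ('i \<Rightarrow> 'c \<Rightarrow> 'c) \<Rightarrow> ('c \<Rightarrow> 'x lab) \<Rightarrow> 'i option \<Rightarrow> 'c \<Rightarrow> 'x lab" where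
  "run I \<sigma> f0 = (THE F. \<forall>x. F x = stage I \<sigma> f0 F x)"

definition terminal ::
  "'i::wellorder set \<Rightarrow> ('i \<Rightarrow> 'c \<Rightarrow> 'c) \<Rightarrow> ('c \<Rightarrow> 'x lab) \<Rightarrow> 'c \<Rightarrow> 'x lab" where
  "terminal I \<sigma> f0 = run I \<sigma> f0 None"

definition basic_sequence :: "('c \<Rightarrow> 'c) set \<Rightarrow> 'i set \<Rightarrow> ('i \<Rightarrow> 'c \<Rightarrow> 'c) \<Rightarrow> bool" where
  "basic_sequence Tw I \<sigma> \<longleftrightarrow> (\<forall>\<eta>\<in>I. \<sigma> \<eta> \<in> Tw)"

definition twist_finite :: "'i set \<Rightarrow> ('i \<Rightarrow> 'c \<Rightarrow> 'c) \<Rightarrow> bool" where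
  "twist_finite I \<sigma> \<longleftrightarrow> (\<forall>\<tau>. finite {\<eta> \<in> I. \<sigma> \<eta> = \<tau>})"

definition universally_convergent :: "'c set \<Rightarrow> 'i::wellorder set \<Rightarrow> ('i \<Rightarrow> 'c \<Rightarrow> 'c) \<Rightarrow> bool" where
  "universally_convergent C I \<sigma> \<longleftrightarrow> (\<forall>c\<in>C. terminal I \<sigma> (\<lambda>c. Val c) c \<noteq> NaC)"

end

theory Submission
  imports Defs
begin

text \<open>
  If every basic twist occurs only finitely often, then every cell is moved at only finitely
  many steps, because only the finitely many twists through one of its coordinates move it; so
  at each limit stage its label is eventually constant.

  Conversely, let a twist \<open>\<tau>\<close> occur infinitely often, and let \<open>\<lambda>\<close> be the first stage preceded
  by infinitely many occurrences of \<open>\<tau>\<close>. Distinct cells keep distinct labels, so a cell \<open>c\<close>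
  moved by \<open>\<tau>\<close> cannot have a settled label at \<open>\<lambda>\<close>: an occurrence of \<open>\<tau>\<close> after the settling
  point would change it. Thus \<open>c\<close> is labelled NaC at \<open>\<lambda>\<close>. Finally \<open>c\<close> lies in a finite set of
  cells closed under all twists. Successor steps permute this set, and at a limit stage its
  finitely many cells cannot all settle, since they would do so simultaneously at a stage
  where one of them is already NaC. So some cell of the set is NaC in the terminal labelling.
\<close>

section \<open>Transfinite runs of permutations\<close>

definition stage_rel :: "'i::wellorder set \<Rightarrow> ('i option \<times> 'i option) set" where
  "stage_rel I = {(Some k, x) | k x. k \<in> cut_below I x}"

lemma wf_stage_rel: "wf (stage_rel (I::'i::wellorder set))"
proof (rule wfUNIVI)
  fix P :: "'i option \<Rightarrow> bool" and x
  assume step: "\<forall>x. (\<forall>y. (y, x) \<in> stage_rel I \<longrightarrow> P y) \<longrightarrow> P x"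
  have "P (Some k)" for k
  proof (induction k rule: less_induct)
    case (less k)
    then show ?case
      using step[rule_format, of "Some k"] by (auto simp: stage_rel_def)
  qed
  then show "P x"
    using step by (cases x) (auto simp: stage_rel_def)
qed

lemma stage_induct:
  assumes "\<And>x. (\<And>k. k \<in> cut_below I x \<Longrightarrow> P (Some k)) \<Longrightarrow> P x"
  shows "P x"
  by (induction x rule: wf_induct[OF wf_stage_rel[of I]]) (auto simp: stage_rel_def intro: assms)

lemma cut_below_subset: "cut_below I x \<subseteq> I"
  by (cases x) auto

lemma cut_below_downward_closed: "k \<in> cut_below I x \<Longrightarrow> j \<in> I \<Longrightarrow> j \<le> k \<Longrightarrow> j \<in> cut_below I x"
  by (cases x) auto

lemma cut_below_cases:
  obtains (start) "cut_below I x = {}"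
  | (succ) m where "m \<in> cut_below I x" "\<forall>k\<in>cut_below I x. k \<le> m"
  | (limit) "cut_below I x \<noteq> {}" "\<not> (\<exists>m\<in>cut_below I x. \<forall>k\<in>cut_below I x. k \<le> m)"
  by blast

definition eventually_in :: "'i::linorder set \<Rightarrow> ('i \<Rightarrow> bool) \<Rightarrow> bool" where
  "eventually_in B P \<longleftrightarrow> (\<exists>k\<in>B. \<forall>k'\<in>B. k \<le> k' \<longrightarrow> P k')"

lemma eventually_in_True: "B \<noteq> {} \<Longrightarrow> eventually_in B (\<lambda>_. True)"
  by (auto simp: eventually_in_def)

lemma eventually_in_conj:
  assumes "eventually_in B P" "eventually_in B Q"
  shows "eventually_in B (\<lambda>k. P k \<and> Q k)"
proof -
  obtain k1 k2 where "k1 \<in> B" "\<forall>k'\<in>B. k1 \<le> k' \<longrightarrow> P k'" "k2 \<in> B" "\<forall>k'\<in>B. k2 \<le> k' \<longrightarrow> Q k'"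
    using assms by (auto simp: eventually_in_def)
  then show ?thesis
    unfolding eventually_in_def by (intro bexI[of _ "max k1 k2"]) (auto simp: max_def)
qed

lemma eventually_in_finite_ball:
  assumes "finite S" "B \<noteq> {}" "\<And>d. d \<in> S \<Longrightarrow> eventually_in B (P d)"
  shows "eventually_in B (\<lambda>k. \<forall>d\<in>S. P d k)"
  using assms by (induction S rule: finite_induct) (auto simp: eventually_in_True eventually_in_conj)

lemma eventually_in_exists: "eventually_in B P \<Longrightarrow> \<exists>k\<in>B. P k"
  by (auto simp: eventually_in_def)

lemma eventually_in_greater:
  "\<not> (\<exists>m\<in>B. \<forall>k\<in>B. k \<le> m) \<Longrightarrow> \<eta> \<in> B \<Longrightarrow> eventually_in B (\<lambda>k. \<eta> < k)"
  unfolding eventually_in_def by (meson le_less_trans not_le)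

lemma eventually_in_const_unique:
  "eventually_in B (\<lambda>k. g k = v) \<Longrightarrow> eventually_in B (\<lambda>k. g k = w) \<Longrightarrow> v = w"
  by (drule (1) eventually_in_conj) (auto dest: eventually_in_exists)

lemma stage_start: "cut_below I x = {} \<Longrightarrow> stage I \<sigma> f0 F x = f0"
  unfolding stage_def Let_def by simp

lemma stage_succ:
  assumes "m \<in> cut_below I x" "\<forall>k\<in>cut_below I x. k \<le> m"
  shows "stage I \<sigma> f0 F x = act (\<sigma> m) (F (Some m))"
proof -
  have "(THE m. m \<in> cut_below I x \<and> (\<forall>k\<in>cut_below I x. k \<le> m)) = m"
    using assms by (intro the_equality) (auto intro: order.antisym)
  then show ?thesis
    using assms unfolding stage_def Let_def by auto
qed

lemma stage_limit:
  assumes "cut_below I x \<noteq> {}" "\<not> (\<exists>m\<in>cut_below I x. \<forall>k\<in>cut_below I x. k \<le> m)"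
  shows "stage I \<sigma> f0 F x c =
    (if \<exists>v. eventually_in (cut_below I x) (\<lambda>k. F (Some k) c = v)
     then THE v. eventually_in (cut_below I x) (\<lambda>k. F (Some k) c = v) else NaC)"
proof -
  have "(cut_below I x = {}) = False" "(\<exists>m\<in>cut_below I x. \<forall>k\<in>cut_below I x. k \<le> m) = False"
    using assms by blast+
  then show ?thesis
    unfolding stage_def Let_def eventually_in_def by (simp only: if_False)
qed

lemma stage_cong:
  assumes "\<And>k. k \<in> cut_below I x \<Longrightarrow> F (Some k) = G (Some k)"
  shows "stage I \<sigma> f0 F x = stage I \<sigma> f0 G x"
proof (cases x rule: cut_below_cases[of I])
  case limit
  have "eventually_in (cut_below I x) (\<lambda>k. F (Some k) c = v) \<longleftrightarrow>
        eventually_in (cut_below I x) (\<lambda>k. G (Some k) c = v)" for c v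
    using assms by (auto simp: eventually_in_def)
  then show ?thesis
    by (simp add: stage_limit[OF limit] fun_eq_iff)
qed (use assms in \<open>simp_all add: stage_start stage_succ\<close>)

lemma run_unfold: "run I \<sigma> f0 x = stage I \<sigma> f0 (run I \<sigma> f0) x"
proof -
  define R where "R = wfrec (stage_rel I) (stage I \<sigma> f0)"
  have adm: "adm_wf (stage_rel I) (stage I \<sigma> f0)"
    unfolding adm_wf_def by (intro allI impI stage_cong) (simp add: stage_rel_def)
  have R_fixpoint: "R y = stage I \<sigma> f0 R y" for y
    unfolding R_def by (rule wfrec_fixpoint[OF wf_stage_rel adm, THEN fun_cong])
  have R_unique: "G = R" if G: "\<forall>y. G y = stage I \<sigma> f0 G y" for G
  proof
    fix y show "G y = R y"
    proof (induction y rule: stage_induct[of I])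
      case (1 y)
      then have "stage I \<sigma> f0 G y = stage I \<sigma> f0 R y"
        by (rule stage_cong)
      then show ?case
        using G R_fixpoint by simp
    qed
  qed
  have "run I \<sigma> f0 = R"
    unfolding run_def
  proof (rule the_equality)
    show "\<forall>y. R y = stage I \<sigma> f0 R y"
      using R_fixpoint by blast
  qed (rule R_unique)
  then show ?thesis
    using R_fixpoint by simp
qed

lemma run_start: "cut_below I x = {} \<Longrightarrow> run I \<sigma> f0 x = f0"
  by (subst run_unfold) (rule stage_start)

lemma run_succ:
  assumes "m \<in> cut_below I x" "\<forall>k\<in>cut_below I x. k \<le> m"
  shows "run I \<sigma> f0 x c = run I \<sigma> f0 (Some m) (inv (\<sigma> m) c)"
  by (subst run_unfold) (simp add: stage_succ[OF assms] act_def)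

lemma run_limit:
  assumes "cut_below I x \<noteq> {}" "\<not> (\<exists>m\<in>cut_below I x. \<forall>k\<in>cut_below I x. k \<le> m)"
    and "eventually_in (cut_below I x) (\<lambda>k. run I \<sigma> f0 (Some k) c = v)"
  shows "run I \<sigma> f0 x c = v"
proof -
  have "(THE v. eventually_in (cut_below I x) (\<lambda>k. run I \<sigma> f0 (Some k) c = v)) = v"
  proof (rule the_equality)
    fix w
    assume "eventually_in (cut_below I x) (\<lambda>k. run I \<sigma> f0 (Some k) c = w)"
    then show "w = v"
      using assms(3) by (rule eventually_in_const_unique)
  qed (rule assms(3))
  then show ?thesis
    using assms by (subst run_unfold) (auto simp: stage_limit)
qed

lemma run_limit_settles:
  assumes "cut_below I x \<noteq> {}" "\<not> (\<exists>m\<in>cut_below I x. \<forall>k\<in>cut_below I x. k \<le> m)"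
    and "run I \<sigma> f0 x c \<noteq> NaC"
  shows "eventually_in (cut_below I x) (\<lambda>k. run I \<sigma> f0 (Some k) c = run I \<sigma> f0 x c)"
proof -
  obtain v where "eventually_in (cut_below I x) (\<lambda>k. run I \<sigma> f0 (Some k) c = v)"
    using assms by (subst (asm) run_unfold) (auto simp: stage_limit split: if_splits)
  moreover from this have "run I \<sigma> f0 x c = v"
    using assms(1,2) by (rule run_limit[rotated 2])
  ultimately show ?thesis
    by simp
qed

lemma run_stable:
  assumes bij: "\<forall>\<eta>\<in>I. bij (\<sigma> \<eta>)" and "k0 \<in> I"
  shows "k0 \<le> j \<Longrightarrow> \<forall>\<eta>\<in>I. k0 \<le> \<eta> \<and> \<eta> < j \<longrightarrow> \<sigma> \<eta> c = c \<Longrightarrow>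
    run I \<sigma> f0 (Some j) c = run I \<sigma> f0 (Some k0) c"
proof (induction j rule: less_induct)
  case (less j)
  show ?case
  proof (cases "j = k0")
    case False
    with less.prems \<open>k0 \<in> I\<close> have k0_below: "k0 \<in> cut_below I (Some j)"
      by simp
    show ?thesis
    proof (cases "Some j" rule: cut_below_cases[of I])
      case (succ m)
      with k0_below have "m \<in> I" "m < j" "k0 \<le> m"
        by auto
      with less.prems(2) have "\<sigma> m c = c"
        by blast
      with bij \<open>m \<in> I\<close> have "inv (\<sigma> m) c = c"
        by (simp add: bij_is_inj inv_f_eq)
      moreover have "run I \<sigma> f0 (Some m) c = run I \<sigma> f0 (Some k0) c"
        using less.prems(2) \<open>m < j\<close> by (intro less.IH[OF \<open>m < j\<close> \<open>k0 \<le> m\<close>]) auto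
      ultimately show ?thesis
        by (simp add: run_succ[OF succ])
    next
      case limit
      have "run I \<sigma> f0 (Some k) c = run I \<sigma> f0 (Some k0) c"
        if "k \<in> cut_below I (Some j)" "k0 \<le> k" for k
        using that less.prems(2) by (intro less.IH) auto
      then have "eventually_in (cut_below I (Some j)) (\<lambda>k. run I \<sigma> f0 (Some k) c = run I \<sigma> f0 (Some k0) c)"
        unfolding eventually_in_def using k0_below by blast
      then show ?thesis
        by (rule run_limit[OF limit])
    qed (use k0_below in blast)
  qed simp
qed

lemma run_legal:
  assumes bij: "\<forall>\<eta>\<in>I. bij (\<sigma> \<eta>)" and moved_finitely: "\<And>c. finite {\<eta>\<in>I. \<sigma> \<eta> c \<noteq> c}"
    and legal: "\<And>c. f0 c \<noteq> NaC"
  shows "run I \<sigma> f0 x c \<noteq> NaC"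
proof (induction x arbitrary: c rule: stage_induct[of I])
  case (1 x)
  show ?case
  proof (cases x rule: cut_below_cases[of I])
    case start
    then show ?thesis
      using legal by (simp add: run_start)
  next
    case (succ m)
    then show ?thesis
      using 1 by (simp add: run_succ)
  next
    case limit
    let ?B = "cut_below I x" and ?M = "{\<eta>\<in>I. \<sigma> \<eta> c \<noteq> c} \<inter> cut_below I x"
    have "eventually_in ?B (\<lambda>k. \<forall>\<eta>\<in>?M. \<eta> < k)"
      using limit moved_finitely by (intro eventually_in_finite_ball eventually_in_greater) auto
    then obtain k0 where k0: "k0 \<in> ?B" "\<forall>\<eta>\<in>?M. \<eta> < k0"
      by (auto dest: eventually_in_exists)
    have "run I \<sigma> f0 (Some k) c = run I \<sigma> f0 (Some k0) c" if "k \<in> ?B" "k0 \<le> k" for k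
    proof (rule run_stable[OF bij _ \<open>k0 \<le> k\<close>])
      show "k0 \<in> I"
        using k0(1) cut_below_subset by blast
      show "\<forall>\<eta>\<in>I. k0 \<le> \<eta> \<and> \<eta> < k \<longrightarrow> \<sigma> \<eta> c = c"
      proof (intro ballI impI)
        fix \<eta>
        assume \<eta>: "\<eta> \<in> I" "k0 \<le> \<eta> \<and> \<eta> < k"
        then have "\<eta> \<in> ?B"
          using cut_below_downward_closed[OF \<open>k \<in> ?B\<close>] by (simp add: less_imp_le)
        with k0(2) \<eta> show "\<sigma> \<eta> c = c"
          using leD by blast
      qed
    qed
    then have "eventually_in ?B (\<lambda>k. run I \<sigma> f0 (Some k) c = run I \<sigma> f0 (Some k0) c)"
      unfolding eventually_in_def using k0(1) by blast
    then have "run I \<sigma> f0 x c = run I \<sigma> f0 (Some k0) c"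
      by (rule run_limit[OF limit])
    then show ?thesis
      using 1 k0(1) by simp
  qed
qed

lemma run_inj:
  assumes bij: "\<forall>\<eta>\<in>I. bij (\<sigma> \<eta>)" and "inj f0"
  shows "run I \<sigma> f0 x c = run I \<sigma> f0 x d \<Longrightarrow> run I \<sigma> f0 x c \<noteq> NaC \<Longrightarrow> c = d"
proof (induction x arbitrary: c d rule: stage_induct[of I])
  case (1 x)
  show ?case
  proof (cases x rule: cut_below_cases[of I])
    case start
    then show ?thesis
      using 1 \<open>inj f0\<close> by (simp add: run_start inj_eq)
  next
    case (succ m)
    then have "inv (\<sigma> m) c = inv (\<sigma> m) d"
      using 1 by (simp add: run_succ)
    moreover have "bij (\<sigma> m)"
      using bij succ(1) cut_below_subset by blast
    then have "inj (inv (\<sigma> m))"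
      by (simp add: bij_is_surj surj_imp_inj_inv)
    ultimately show ?thesis
      by (simp add: inj_eq)
  next
    case limit
    have "eventually_in (cut_below I x) (\<lambda>k. run I \<sigma> f0 (Some k) c = run I \<sigma> f0 x c)"
      "eventually_in (cut_below I x) (\<lambda>k. run I \<sigma> f0 (Some k) d = run I \<sigma> f0 x d)"
      using run_limit_settles[OF limit] "1.prems" by metis+
    then obtain k where "k \<in> cut_below I x" "run I \<sigma> f0 (Some k) c = run I \<sigma> f0 x c"
      "run I \<sigma> f0 (Some k) d = run I \<sigma> f0 x d"
      using eventually_in_exists[OF eventually_in_conj] by blast
    then show ?thesis
      using 1 by simp
  qed
qed

lemma cut_below_successor:
  assumes "\<eta> \<in> cut_below I x" "\<not> (\<exists>m\<in>cut_below I x. \<forall>k\<in>cut_below I x. k \<le> m)"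
  obtains s where "s \<in> cut_below I x" "\<eta> \<in> cut_below I (Some s)" "\<forall>k\<in>cut_below I (Some s). k \<le> \<eta>"
proof -
  obtain k where k: "k \<in> cut_below I x" "\<eta> < k"
    using assms by (auto simp: not_le)
  define s where "s = (LEAST j. j \<in> I \<and> \<eta> < j)"
  have "k \<in> I"
    using k(1) cut_below_subset by blast
  then have s: "s \<in> I" "\<eta> < s" "s \<le> k"
    using k(2) LeastI[of "\<lambda>j. j \<in> I \<and> \<eta> < j"] Least_le[of "\<lambda>j. j \<in> I \<and> \<eta> < j"]
    unfolding s_def by auto
  show ?thesis
  proof (rule that)
    show "s \<in> cut_below I x"
      using cut_below_downward_closed[OF k(1) s(1,3)] .
    show "\<eta> \<in> cut_below I (Some s)"
      using assms(1) cut_below_subset s(2) by auto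
    show "\<forall>j\<in>cut_below I (Some s). j \<le> \<eta>"
      using not_less_Least[of _ "\<lambda>j. j \<in> I \<and> \<eta> < j"] unfolding s_def by fastforce
  qed
qed

lemma run_NaC_at_cofinal_limit:
  assumes bij: "\<forall>\<eta>\<in>I. bij (\<sigma> \<eta>)" and "inj f0"
    and limit: "cut_below I x \<noteq> {}" "\<not> (\<exists>m\<in>cut_below I x. \<forall>k\<in>cut_below I x. k \<le> m)"
    and cofinal: "\<forall>k\<in>cut_below I x. \<exists>\<eta>\<in>cut_below I x. k \<le> \<eta> \<and> \<sigma> \<eta> = \<tau>"
    and moved: "\<tau> c \<noteq> c"
  shows "run I \<sigma> f0 x c = NaC"
proof (rule ccontr)
  assume legal: "run I \<sigma> f0 x c \<noteq> NaC"
  obtain k where k: "k \<in> cut_below I x"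
    "\<forall>k'\<in>cut_below I x. k \<le> k' \<longrightarrow> run I \<sigma> f0 (Some k') c = run I \<sigma> f0 x c"
    using run_limit_settles[OF limit legal] unfolding eventually_in_def by blast
  obtain \<eta> where \<eta>: "\<eta> \<in> cut_below I x" "k \<le> \<eta>" "\<sigma> \<eta> = \<tau>"
    using cofinal k(1) by blast
  obtain s where s: "s \<in> cut_below I x" "\<eta> \<in> cut_below I (Some s)" "\<forall>k\<in>cut_below I (Some s). k \<le> \<eta>"
    using cut_below_successor[OF \<eta>(1) limit(2)] by blast
  have "run I \<sigma> f0 (Some \<eta>) (inv \<tau> c) = run I \<sigma> f0 (Some s) c"
    by (simp add: run_succ[OF s(2,3)] \<eta>(3))
  also have "\<dots> = run I \<sigma> f0 (Some \<eta>) c"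
  proof -
    have "k \<le> s"
      using \<eta>(2) s(2) by (simp add: less_imp_le order.trans)
    then show ?thesis
      using k(2) s(1) \<eta>(1,2) by simp
  qed
  finally have "run I \<sigma> f0 (Some \<eta>) (inv \<tau> c) = run I \<sigma> f0 (Some \<eta>) c" .
  moreover have "run I \<sigma> f0 (Some \<eta>) c \<noteq> NaC"
    using k(2) \<eta>(1,2) legal by simp
  ultimately have "inv \<tau> c = c"
    using run_inj[OF bij \<open>inj f0\<close>] by simp
  moreover have "bij \<tau>"
    using bij \<eta>(1,3) cut_below_subset by blast
  ultimately show False
    using moved by (metis bij_inv_eq_iff)
qed

lemma infinite_subset_cofinal_limit:
  fixes I :: "'i::wellorder set"
  assumes "S \<subseteq> I" "infinite S"
  obtains x where "x \<in> insert None (Some ` I)" "cut_below I x \<noteq> {}"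
    "\<not> (\<exists>m\<in>cut_below I x. \<forall>k\<in>cut_below I x. k \<le> m)"
    "\<forall>k\<in>cut_below I x. \<exists>\<eta>\<in>cut_below I x. k \<le> \<eta> \<and> \<eta> \<in> S"
proof -
  define T where "T = {i\<in>I. infinite (S \<inter> cut_below I (Some i))}"
  \<comment> \<open>\<open>x\<close> is the first stage preceded by infinitely many elements of \<open>S\<close>.\<close>
  define x where "x = (if T = {} then None else Some (LEAST i. i \<in> T))"
  let ?B = "cut_below I x"
  have "x \<in> insert None (Some ` I) \<and> infinite (S \<inter> ?B) \<and> (\<forall>k\<in>?B. finite (S \<inter> cut_below I (Some k)))"
  proof (cases "T = {}")
    case True
    then show ?thesis
      using assms by (auto simp: x_def T_def Int_absorb2)
  next
    case False
    then have "(LEAST i. i \<in> T) \<in> T"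
      by (auto intro: LeastI)
    moreover have "k \<notin> T" if "k < (LEAST i. i \<in> T)" for k
      using not_less_Least that by blast
    ultimately show ?thesis
      using False by (auto simp: x_def T_def)
  qed
  then have x: "x \<in> insert None (Some ` I)" and infinite_B: "infinite (S \<inter> ?B)"
    and finite_below: "\<forall>k\<in>?B. finite (S \<inter> cut_below I (Some k))"
    by blast+
  have no_greatest: "\<not> (\<exists>m\<in>?B. \<forall>k\<in>?B. k \<le> m)"
  proof
    assume "\<exists>m\<in>?B. \<forall>k\<in>?B. k \<le> m"
    then obtain m where "m \<in> ?B" "S \<inter> ?B \<subseteq> insert m (S \<inter> cut_below I (Some m))"
      using cut_below_subset by fastforce
    then show False
      using infinite_B finite_below by (meson finite_insert finite_subset)
  qed
  have "\<exists>\<eta>\<in>?B. k \<le> \<eta> \<and> \<eta> \<in> S" if "k \<in> ?B" for k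
  proof (rule ccontr)
    assume "\<not> ?thesis"
    then have "S \<inter> ?B \<subseteq> S \<inter> cut_below I (Some k)"
      using assms(1) by (auto simp: not_le)
    then show False
      using infinite_B finite_below that by (meson finite_subset)
  qed
  moreover have "cut_below I x \<noteq> {}"
    using infinite_B by auto
  ultimately show ?thesis
    using that x no_greatest by blast
qed

lemma run_limit_NaC_in_finite_set:
  assumes limit: "cut_below I y \<noteq> {}" "\<not> (\<exists>m\<in>cut_below I y. \<forall>k\<in>cut_below I y. k \<le> m)"
    and "finite Ob" and "i0 \<in> cut_below I y"
    and NaC_later: "\<forall>k\<in>cut_below I y. i0 \<le> k \<longrightarrow> (\<exists>d\<in>Ob. run I \<sigma> f0 (Some k) d = NaC)"
  shows "\<exists>d\<in>Ob. run I \<sigma> f0 y d = NaC"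
proof (rule ccontr)
  assume no_NaC: "\<not> ?thesis"
  then have "eventually_in (cut_below I y) (\<lambda>k. run I \<sigma> f0 (Some k) d = run I \<sigma> f0 y d)"
    if "d \<in> Ob" for d
    using that by (intro run_limit_settles[OF limit]) auto
  then have "eventually_in (cut_below I y)
      (\<lambda>k. i0 \<le> k \<and> (\<forall>d\<in>Ob. run I \<sigma> f0 (Some k) d = run I \<sigma> f0 y d))"
    using \<open>i0 \<in> cut_below I y\<close> limit(1) \<open>finite Ob\<close>
    by (intro eventually_in_conj eventually_in_finite_ball) (auto simp: eventually_in_def)
  then obtain k where "k \<in> cut_below I y" "i0 \<le> k"
    "\<forall>d\<in>Ob. run I \<sigma> f0 (Some k) d = run I \<sigma> f0 y d"
    by (auto dest: eventually_in_exists)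
  with NaC_later no_NaC show False
    by auto
qed

lemma run_NaC_persists:
  assumes bij: "\<forall>\<eta>\<in>I. bij (\<sigma> \<eta>)" and "finite Ob" and invariant: "\<forall>\<eta>\<in>I. \<sigma> \<eta> ` Ob \<subseteq> Ob"
    and x: "x \<in> insert None (Some ` I)" and "d0 \<in> Ob" and NaC: "run I \<sigma> f0 x d0 = NaC"
  shows "\<exists>d\<in>Ob. terminal I \<sigma> f0 d = NaC"
proof (cases x)
  case None
  then show ?thesis
    using \<open>d0 \<in> Ob\<close> NaC by (auto simp: terminal_def)
next
  case (Some i0)
  with x have "i0 \<in> I"
    by auto
  have "i0 \<in> cut_below I y \<or> y = Some i0 \<Longrightarrow> \<exists>d\<in>Ob. run I \<sigma> f0 y d = NaC" for y
  proof (induction y rule: stage_induct[of I])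
    case (1 y)
    show ?case
    proof (cases "y = Some i0")
      case False
      with "1.prems" have i0_below: "i0 \<in> cut_below I y"
        by blast
      show ?thesis
      proof (cases y rule: cut_below_cases[of I])
        case (succ m)
        with i0_below \<open>i0 \<in> I\<close> have "m \<in> I" "i0 \<in> cut_below I (Some m) \<or> m = i0"
          using cut_below_subset by force+
        then obtain d where "d \<in> Ob" "run I \<sigma> f0 (Some m) d = NaC"
          using "1.IH"[OF succ(1)] by blast
        moreover have "inv (\<sigma> m) (\<sigma> m d) = d"
          using bij \<open>m \<in> I\<close> by (simp add: bij_is_inj)
        ultimately have "\<sigma> m d \<in> Ob" "run I \<sigma> f0 y (\<sigma> m d) = NaC"
          using invariant \<open>m \<in> I\<close> by (auto simp: run_succ[OF succ])
        then show ?thesis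
          by blast
      next
        case limit
        have "\<exists>d\<in>Ob. run I \<sigma> f0 (Some k) d = NaC" if "k \<in> cut_below I y" "i0 \<le> k" for k
          using "1.IH"[OF that(1)] that(2) \<open>i0 \<in> I\<close> by (auto simp: order.order_iff_strict)
        with limit \<open>finite Ob\<close> i0_below show ?thesis
          by (intro run_limit_NaC_in_finite_set) auto
      qed (use i0_below in blast)
    qed (use \<open>d0 \<in> Ob\<close> NaC Some in blast)
  qed
  then show ?thesis
    using \<open>i0 \<in> I\<close> by (auto simp: terminal_def)
qed

lemma twist_finite_imp_universally_convergent:
  assumes "basic_sequence Tw I \<sigma>" "\<And>\<tau>. \<tau> \<in> Tw \<Longrightarrow> bij \<tau>"
    and moving_finite: "\<And>c. finite {\<tau>\<in>Tw. \<tau> c \<noteq> c}"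
    and "twist_finite I \<sigma>"
  shows "universally_convergent C I \<sigma>"
proof -
  have in_Tw: "\<forall>\<eta>\<in>I. \<sigma> \<eta> \<in> Tw"
    using assms(1) by (simp add: basic_sequence_def)
  have "finite {\<eta>\<in>I. \<sigma> \<eta> c \<noteq> c}" for c
  proof (rule finite_subset)
    show "{\<eta>\<in>I. \<sigma> \<eta> c \<noteq> c} \<subseteq> (\<Union>\<tau>\<in>{\<tau>\<in>Tw. \<tau> c \<noteq> c}. {\<eta>\<in>I. \<sigma> \<eta> = \<tau>})"
      using in_Tw by auto
    show "finite (\<Union>\<tau>\<in>{\<tau>\<in>Tw. \<tau> c \<noteq> c}. {\<eta>\<in>I. \<sigma> \<eta> = \<tau>})"
      using moving_finite \<open>twist_finite I \<sigma>\<close> by (simp add: twist_finite_def)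
  qed
  then show ?thesis
    using run_legal[of I \<sigma> "\<lambda>c. Val c"] in_Tw assms(2)
    by (simp add: universally_convergent_def terminal_def)
qed

lemma universally_convergent_imp_twist_finite:
  assumes "basic_sequence Tw I \<sigma>" "\<And>\<tau>. \<tau> \<in> Tw \<Longrightarrow> bij \<tau>"
    and witness: "\<And>\<tau>. \<tau> \<in> Tw \<Longrightarrow>
      \<exists>c Ob. \<tau> c \<noteq> c \<and> c \<in> Ob \<and> finite Ob \<and> Ob \<subseteq> C \<and> (\<forall>\<tau>'\<in>Tw. \<tau>' ` Ob \<subseteq> Ob)"
    and "universally_convergent C I \<sigma>"
  shows "twist_finite I \<sigma>"
  unfolding twist_finite_def
proof (rule ccontr)
  assume "\<not> (\<forall>\<tau>. finite {\<eta>\<in>I. \<sigma> \<eta> = \<tau>})"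
  then obtain \<tau> where infinite: "infinite {\<eta>\<in>I. \<sigma> \<eta> = \<tau>}"
    by blast
  have in_Tw: "\<forall>\<eta>\<in>I. \<sigma> \<eta> \<in> Tw"
    using assms(1) by (simp add: basic_sequence_def)
  then have bij: "\<forall>\<eta>\<in>I. bij (\<sigma> \<eta>)"
    using assms(2) by blast
  have "\<tau> \<in> Tw"
    using infinite in_Tw by (metis (mono_tags, lifting) empty_Collect_eq finite.emptyI)
  then obtain c Ob where c: "\<tau> c \<noteq> c" "c \<in> Ob" "finite Ob" "Ob \<subseteq> C" "\<forall>\<eta>\<in>I. \<sigma> \<eta> ` Ob \<subseteq> Ob"
    using witness in_Tw by meson
  obtain x where x: "x \<in> insert None (Some ` I)" "cut_below I x \<noteq> {}"
    "\<not> (\<exists>m\<in>cut_below I x. \<forall>k\<in>cut_below I x. k \<le> m)"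
    "\<forall>k\<in>cut_below I x. \<exists>\<eta>\<in>cut_below I x. k \<le> \<eta> \<and> \<eta> \<in> {\<eta>\<in>I. \<sigma> \<eta> = \<tau>}"
    using infinite_subset_cofinal_limit[OF _ infinite] by blast
  have "inj (\<lambda>c. Val c)"
    by (simp add: inj_def)
  moreover have "\<forall>k\<in>cut_below I x. \<exists>\<eta>\<in>cut_below I x. k \<le> \<eta> \<and> \<sigma> \<eta> = \<tau>"
    using x(4) by blast
  ultimately have "run I \<sigma> (\<lambda>c. Val c) x c = NaC"
    using bij x(2,3) c(1) by (intro run_NaC_at_cofinal_limit)
  then obtain d where "d \<in> Ob" "terminal I \<sigma> (\<lambda>c. Val c) d = NaC"
    using run_NaC_persists[OF bij c(3,5) x(1) c(2)] by blast
  then show False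
    using \<open>universally_convergent C I \<sigma>\<close> c(4) by (auto simp: universally_convergent_def)
qed


section \<open>Twists of the cubes\<close>

lemma cneg_cneg [simp]: "cneg (cneg a) = a"
  by (cases a) auto

lemma is_inf_cneg [simp]: "is_inf (cneg a) \<longleftrightarrow> is_inf a"
  by (cases a) (auto simp: is_inf_def)

lemma cneg_in_crd_set [simp]: "cneg a \<in> crd_set L \<longleftrightarrow> a \<in> crd_set L"
  by (cases a) (auto simp: crd_set_def)

lemma UNIV_axis: "(UNIV :: axis set) = {AX, AY, AZ}"
  using axis.exhaust by auto

lemma finite_UNIV_axis [simp]: "finite (UNIV :: axis set)"
  by (simp add: UNIV_axis)

lemma all_axis: "(\<forall>i. P i) \<longleftrightarrow> P AX \<and> P AY \<and> P AZ"
  by (metis axis.exhaust)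

lemma bij_if_funpow4: "(\<And>x. f (f (f (f x))) = x) \<Longrightarrow> bij f"
  by (rule o_bij[of "f \<circ> f \<circ> f"]) (auto simp: fun_eq_iff)

lemma funpow_if_invariant:
  assumes "\<And>p. P (f p) \<longleftrightarrow> P p"
  shows "((\<lambda>p. if P p then f p else p) ^^ k) p = (if P p then (f ^^ k) p else p)"
proof (induction k)
  case (Suc k)
  have "P ((f ^^ k) p) \<longleftrightarrow> P p"
    by (induction k) (simp_all add: assms)
  with Suc show ?case
    by simp
qed simp

lemma bij_if_invariant:
  assumes "bij f" "\<And>p. P (f p) \<longleftrightarrow> P p"
  shows "bij (\<lambda>p. if P p then f p else p)"
proof (rule o_bij[of "\<lambda>p. if P p then inv f p else p"])
  have "P (inv f p) \<longleftrightarrow> P p" for p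
    using assms(2)[of "inv f p"] \<open>bij f\<close> by (simp add: bij_is_surj surj_f_inv_f)
  with \<open>bij f\<close> show "(\<lambda>p. if P p then inv f p else p) \<circ> (\<lambda>p. if P p then f p else p) = id"
    "(\<lambda>p. if P p then f p else p) \<circ> (\<lambda>p. if P p then inv f p else p) = id"
    using assms(2) by (auto simp: fun_eq_iff bij_is_inj bij_is_surj surj_f_inv_f)
qed

lemma rotp4: "rotp i (rotp i (rotp i (rotp i p))) = p"
  by (cases i; cases p) auto

lemma rota4: "rota i (rota i (rota i (rota i j))) = j"
  by (cases i; cases j) auto

lemma coord_rotp_axis [simp]: "coord i (rotp i p) = coord i p"
  by (cases i; cases p) auto

lemma is_inf_coord_rotp: "is_inf (coord (rota i j) (rotp i p)) \<longleftrightarrow> is_inf (coord j p)"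
  by (cases i; cases j; cases p) auto

lemma faces_rotp: "{j. is_inf (coord j (rotp i p))} = rota i ` {j. is_inf (coord j p)}"
proof
  show "rota i ` {j. is_inf (coord j p)} \<subseteq> {j. is_inf (coord j (rotp i p))}"
    using is_inf_coord_rotp[of i _ p] by auto
  show "{j. is_inf (coord j (rotp i p))} \<subseteq> rota i ` {j. is_inf (coord j p)}"
  proof
    fix j
    assume "j \<in> {j. is_inf (coord j (rotp i p))}"
    moreover have "j = rota i (rota i (rota i (rota i j)))"
      by (simp add: rota4)
    ultimately show "j \<in> rota i ` {j. is_inf (coord j p)}"
      using is_inf_coord_rotp[of i "rota i (rota i (rota i j))" p] by auto
  qed
qed

lemma rotp_in_Ucube [simp]: "rotp i p \<in> Ucube L \<longleftrightarrow> p \<in> Ucube L"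
  by (cases i; cases p) (auto simp: Ucube_def all_axis)

lemma rotp_in_edgeless [simp]: "rotp i p \<in> edgeless L \<longleftrightarrow> p \<in> edgeless L"
proof -
  have "inj (rota i)"
    by (intro bij_is_inj bij_if_funpow4 rota4)
  then show ?thesis
    by (simp add: edgeless_def faces_rotp card_image inj_on_subset)
qed

lemma rot_in_edged [simp]: "(rotp i p, rota i j) \<in> edged L \<longleftrightarrow> (p, j) \<in> edged L"
  by (simp add: edged_def is_inf_coord_rotp)

lemma map_prod_rot_in_edged [simp]: "map_prod (rotp i) (rota i) c \<in> edged L \<longleftrightarrow> c \<in> edged L"
  by (cases c) simp

lemma faces_eq:
  "{j. is_inf (coord j (x, y, z))} =
    (if is_inf x then {AX} else {}) \<union> (if is_inf y then {AY} else {}) \<union> (if is_inf z then {AZ} else {})"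
proof (rule set_eqI)
  fix j
  show "j \<in> {j. is_inf (coord j (x, y, z))} \<longleftrightarrow>
    j \<in> (if is_inf x then {AX} else {}) \<union> (if is_inf y then {AY} else {}) \<union> (if is_inf z then {AZ} else {})"
    by (cases j) auto
qed

lemma edgeless_iff:
  "(x, y, z) \<in> edgeless L \<longleftrightarrow> x \<in> crd_set L \<and> y \<in> crd_set L \<and> z \<in> crd_set L \<and>
    (is_inf x \<and> \<not> is_inf y \<and> \<not> is_inf z \<or> \<not> is_inf x \<and> is_inf y \<and> \<not> is_inf z \<or>
     \<not> is_inf x \<and> \<not> is_inf y \<and> is_inf z)"
  by (cases "is_inf x"; cases "is_inf y"; cases "is_inf z") (simp_all add: edgeless_def Ucube_def faces_eq all_axis)

lemma edgeless_has_face: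
  assumes "p \<in> edgeless L"
  obtains j where "(p, j) \<in> edged L"
proof -
  have "card {j. is_inf (coord j p)} = 1"
    using assms by (simp add: edgeless_def)
  then have "{j. is_inf (coord j p)} \<noteq> {}"
    by (metis card.empty zero_neq_one)
  with assms that show ?thesis
    by (auto simp: edgeless_def edged_def)
qed

lemma qturn_pt_conv:
  "qturn_pt L i \<alpha> = (\<lambda>p. if p \<in> edgeless L \<and> coord i p = \<alpha> then rotp i p else p)"
  by (simp add: fun_eq_iff qturn_pt_def)

lemma qturn_edge_conv:
  "qturn_edge L i \<alpha> = (\<lambda>c. if c \<in> edged L \<and> coord i (fst c) = \<alpha> then map_prod (rotp i) (rota i) c else c)"
  by (simp add: fun_eq_iff qturn_edge_def map_prod_def split_beta)

lemma bij_qturn_pt: "bij (qturn_pt L i \<alpha>)"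
  unfolding qturn_pt_conv by (intro bij_if_invariant bij_if_funpow4 rotp4) simp

lemma bij_qturn_edge: "bij (qturn_edge L i \<alpha>)"
  unfolding qturn_edge_conv
proof (intro bij_if_invariant bij_if_funpow4)
  fix c :: "'a pt \<times> axis"
  show "map_prod (rotp i) (rota i) (map_prod (rotp i) (rota i)
    (map_prod (rotp i) (rota i) (map_prod (rotp i) (rota i) c))) = c"
    by (cases c) (simp add: rotp4 rota4)
qed simp

lemma funpow_qturn_pt:
  "p \<in> edgeless L \<Longrightarrow> coord i p = \<alpha> \<Longrightarrow> (qturn_pt L i \<alpha> ^^ k) p = (rotp i ^^ k) p"
  unfolding qturn_pt_conv by (subst funpow_if_invariant) simp_all

lemma funpow_qturn_edge:
  assumes "c \<in> edged L" "coord i (fst c) = \<alpha>"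
  shows "fst ((qturn_edge L i \<alpha> ^^ k) c) = (rotp i ^^ k) (fst c)"
proof -
  have "fst ((map_prod (rotp i) (rota i) ^^ k) d) = (rotp i ^^ k) (fst d)" for d
    by (induction k) simp_all
  with assms show ?thesis
    unfolding qturn_edge_conv by (subst funpow_if_invariant) simp_all
qed

lemma bij_basic_twist:
  "(\<And>i \<alpha>. bij (qt i \<alpha>)) \<Longrightarrow> \<tau> \<in> basic_twists A qt \<Longrightarrow> bij \<tau>"
  by (auto simp: basic_twists_def)

lemma basic_twist_image_subset:
  assumes "\<And>i \<alpha>. qt i \<alpha> ` S \<subseteq> S" "\<tau> \<in> basic_twists A qt"
  shows "\<tau> ` S \<subseteq> S"
proof -
  have "(qt i \<alpha> ^^ k) ` S \<subseteq> S" for i \<alpha> k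
    using assms(1) by (induction k) (auto simp: image_subset_iff)
  with assms(2) show ?thesis
    unfolding basic_twists_def by blast
qed

lemma finite_basic_twists_moving:
  assumes "\<And>i \<alpha>. \<alpha> \<noteq> a i \<Longrightarrow> qt i \<alpha> c = c"
  shows "finite {\<tau> \<in> basic_twists A qt. \<tau> c \<noteq> c}"
proof (rule finite_subset)
  show "{\<tau> \<in> basic_twists A qt. \<tau> c \<noteq> c} \<subseteq> (\<lambda>(i, k). qt i (a i) ^^ k) ` (UNIV \<times> {1, 2, 3})"
  proof
    fix \<tau>
    assume "\<tau> \<in> {\<tau> \<in> basic_twists A qt. \<tau> c \<noteq> c}"
    then obtain i \<alpha> k where \<tau>: "\<tau> = qt i \<alpha> ^^ k" "k \<in> {1, 2, 3}" "\<tau> c \<noteq> c"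
      unfolding basic_twists_def by blast
    have "\<alpha> = a i"
    proof (rule ccontr)
      assume "\<alpha> \<noteq> a i"
      then have "(qt i \<alpha> ^^ k) c = c"
        using assms by (induction k) simp_all
      with \<tau> show False
        by simp
    qed
    with \<tau> show "\<tau> \<in> (\<lambda>(i, k). qt i (a i) ^^ k) ` (UNIV \<times> {1, 2, 3})"
      by force
  qed
qed simp

text \<open>Twists only permute and negate coordinates, so the points whose coordinates lie in a
  finite \<open>cneg\<close>-closed set form a finite set of cells closed under all twists.\<close>

definition coord_box :: "'a crd set \<Rightarrow> 'a pt set" where
  "coord_box V = {p. \<forall>i. coord i p \<in> V}"

lemma finite_coord_box: "finite V \<Longrightarrow> finite (coord_box V)"
  by (rule finite_subset[of _ "V \<times> V \<times> V"]) (auto simp: coord_box_def all_axis)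

lemma rotp_in_coord_box:
  "(\<And>a. a \<in> V \<Longrightarrow> cneg a \<in> V) \<Longrightarrow> p \<in> coord_box V \<Longrightarrow> rotp i p \<in> coord_box V"
  by (cases i; cases p) (auto simp: coord_box_def all_axis)

definition signed_coords :: "'a pt \<Rightarrow> 'a crd set" where
  "signed_coords p = (\<Union>j. {coord j p, cneg (coord j p)})"

lemma finite_signed_coords: "finite (signed_coords p)"
  by (simp add: signed_coords_def)

lemma cneg_in_signed_coords: "a \<in> signed_coords p \<Longrightarrow> cneg a \<in> signed_coords p"
  by (auto simp: signed_coords_def)

lemma in_coord_box_signed_coords: "p \<in> coord_box (signed_coords p)"
  by (auto simp: coord_box_def signed_coords_def)

lemma rotp_in_coord_box_signed_coords:
  "q \<in> coord_box (signed_coords p) \<Longrightarrow> rotp i q \<in> coord_box (signed_coords p)"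
  by (rule rotp_in_coord_box[OF cneg_in_signed_coords])

lemma moved_edgeless_point:
  assumes "infinite L" "\<alpha> \<in> crd_set L" "k \<in> {1, 2, 3}"
  obtains p where "p \<in> edgeless L" "coord i p = \<alpha>" "(rotp i ^^ k) p \<noteq> p"
proof -
  obtain r where "r \<in> L"
    using assms(1) by (metis ex_in_conv finite.emptyI)
  \<comment> \<open>\<open>u\<close> is infinite exactly when \<open>\<alpha>\<close> is not, so \<open>p\<close> lies on exactly one face.\<close>
  define u where "u = (if is_inf \<alpha> then Pos r else PInf)"
  define p where "p = (case i of AX \<Rightarrow> (\<alpha>, u, Zero) | AY \<Rightarrow> (Zero, \<alpha>, u) | AZ \<Rightarrow> (u, Zero, \<alpha>))"
  have "{Zero, Pos r, PInf} \<subseteq> crd_set L"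
    using \<open>r \<in> L\<close> by (auto simp: crd_set_def)
  moreover have "k = Suc 0 \<or> k = Suc (Suc 0) \<or> k = Suc (Suc (Suc 0))"
    using assms(3) by auto
  ultimately have "p \<in> edgeless L \<and> coord i p = \<alpha> \<and> (rotp i ^^ k) p \<noteq> p"
    using assms(2)
    by (cases i; cases \<alpha>; elim disjE)
      (simp_all add: p_def u_def edgeless_iff is_inf_def)
  with that show ?thesis
    by blast
qed

lemma edgeless_twist_witness:
  assumes "infinite L" "\<tau> \<in> basic_twists (crd_set L) (qturn_pt L)"
  shows "\<exists>c Ob. \<tau> c \<noteq> c \<and> c \<in> Ob \<and> finite Ob \<and> Ob \<subseteq> edgeless L \<and>
    (\<forall>\<tau>'\<in>basic_twists (crd_set L) (qturn_pt L). \<tau>' ` Ob \<subseteq> Ob)"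
proof -
  obtain i \<alpha> k where \<tau>: "\<tau> = qturn_pt L i \<alpha> ^^ k" "\<alpha> \<in> crd_set L" "k \<in> {1, 2, 3}"
    using assms(2) unfolding basic_twists_def by blast
  obtain p where p: "p \<in> edgeless L" "coord i p = \<alpha>" "(rotp i ^^ k) p \<noteq> p"
    using moved_edgeless_point[OF assms(1) \<tau>(2,3)] by blast
  define Ob where "Ob = edgeless L \<inter> coord_box (signed_coords p)"
  have "qturn_pt L j \<beta> ` Ob \<subseteq> Ob" for j \<beta>
    using rotp_in_coord_box_signed_coords[where p = p] by (auto simp: Ob_def qturn_pt_def)
  then have "\<forall>\<tau>'\<in>basic_twists (crd_set L) (qturn_pt L). \<tau>' ` Ob \<subseteq> Ob"
    using basic_twist_image_subset by blast
  moreover have "\<tau> p \<noteq> p"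
    using funpow_qturn_pt[OF p(1,2)] p(3) \<tau>(1) by simp
  moreover have "p \<in> Ob" "finite Ob"
    using p(1) in_coord_box_signed_coords[of p] finite_coord_box[OF finite_signed_coords[of p]]
    by (simp_all add: Ob_def)
  moreover have "Ob \<subseteq> edgeless L"
    by (simp add: Ob_def)
  ultimately show ?thesis
    by blast
qed

lemma edged_twist_witness:
  assumes "infinite L" "\<tau> \<in> basic_twists (crd_set L) (qturn_edge L)"
  shows "\<exists>c Ob. \<tau> c \<noteq> c \<and> c \<in> Ob \<and> finite Ob \<and> Ob \<subseteq> edged L \<and>
    (\<forall>\<tau>'\<in>basic_twists (crd_set L) (qturn_edge L). \<tau>' ` Ob \<subseteq> Ob)"
proof -
  obtain i \<alpha> k where \<tau>: "\<tau> = qturn_edge L i \<alpha> ^^ k" "\<alpha> \<in> crd_set L" "k \<in> {1, 2, 3}"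
    using assms(2) unfolding basic_twists_def by blast
  obtain p where p: "p \<in> edgeless L" "coord i p = \<alpha>" "(rotp i ^^ k) p \<noteq> p"
    using moved_edgeless_point[OF assms(1) \<tau>(2,3)] by blast
  obtain j where j: "(p, j) \<in> edged L"
    using edgeless_has_face[OF p(1)] .
  define Ob where "Ob = edged L \<inter> coord_box (signed_coords p) \<times> UNIV"
  have "qturn_edge L j \<beta> ` Ob \<subseteq> Ob" for j \<beta>
    using rotp_in_coord_box_signed_coords[where p = p] by (auto simp: Ob_def qturn_edge_conv)
  then have "\<forall>\<tau>'\<in>basic_twists (crd_set L) (qturn_edge L). \<tau>' ` Ob \<subseteq> Ob"
    using basic_twist_image_subset by blast
  moreover have "\<tau> (p, j) \<noteq> (p, j)"
    using funpow_qturn_edge[OF j] p(2,3) \<tau>(1) by (metis fst_conv)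
  moreover have "(p, j) \<in> Ob" "finite Ob"
    using j in_coord_box_signed_coords[of p] finite_coord_box[OF finite_signed_coords[of p]]
    by (simp_all add: Ob_def)
  moreover have "Ob \<subseteq> edged L"
    by (auto simp: Ob_def)
  ultimately show ?thesis
    by blast
qed

theorem lemma3p3:
  fixes L :: "'a set"
    and I :: "'i::wellorder set" and \<sigma> :: "'i \<Rightarrow> 'a pt \<Rightarrow> 'a pt"
    and J :: "'j::wellorder set" and \<tau> :: "'j \<Rightarrow> 'a pt \<times> axis \<Rightarrow> 'a pt \<times> axis"
  assumes "infinite L"
  shows "(basic_sequence (basic_twists (crd_set L) (qturn_pt L)) I \<sigma> \<longrightarrow>
            (universally_convergent (edgeless L) I \<sigma> \<longleftrightarrow> twist_finite I \<sigma>))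
       \<and> (basic_sequence (basic_twists (crd_set L) (qturn_edge L)) J \<tau> \<longrightarrow>
            (universally_convergent (edged L) J \<tau> \<longleftrightarrow> twist_finite J \<tau>))"
proof (intro conjI impI iffI)
  let ?Tw = "basic_twists (crd_set L) (qturn_pt L)"
  assume seq: "basic_sequence ?Tw I \<sigma>"
  have bij: "\<And>\<tau>. \<tau> \<in> ?Tw \<Longrightarrow> bij \<tau>"
    using bij_basic_twist bij_qturn_pt by blast
  show "twist_finite I \<sigma>" if "universally_convergent (edgeless L) I \<sigma>"
    using universally_convergent_imp_twist_finite[OF seq bij edgeless_twist_witness[OF assms] that] .
  have "finite {\<tau>\<in>?Tw. \<tau> p \<noteq> p}" for p
    by (rule finite_basic_twists_moving[where a = "\<lambda>i. coord i p"]) (simp add: qturn_pt_def)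
  then show "universally_convergent (edgeless L) I \<sigma>" if "twist_finite I \<sigma>"
    using twist_finite_imp_universally_convergent[OF seq bij _ that] by blast
next
  let ?Tw = "basic_twists (crd_set L) (qturn_edge L)"
  assume seq: "basic_sequence ?Tw J \<tau>"
  have bij: "\<And>\<tau>. \<tau> \<in> ?Tw \<Longrightarrow> bij \<tau>"
    using bij_basic_twist bij_qturn_edge by blast
  show "twist_finite J \<tau>" if "universally_convergent (edged L) J \<tau>"
    using universally_convergent_imp_twist_finite[OF seq bij edged_twist_witness[OF assms] that] .
  have "finite {\<tau>\<in>?Tw. \<tau> c \<noteq> c}" for c
    by (rule finite_basic_twists_moving[where a = "\<lambda>i. coord i (fst c)"]) (simp add: qturn_edge_def)
  then show "universally_convergent (edged L) J \<tau>" if "twist_finite J \<tau>"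
    using twist_finite_imp_universally_convergent[OF seq bij _ that] by blast
qed

end
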